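(* Let $X$ be a countably infinite set and $W=W_F$. Let $\succeq$ be a preorder on $W_F$ satisfying Strong Pareto, Permutation Invariance, and Quasi-Independence. If $w,v\in W_F$ are such that $Z=\{x\in X: w(x)\neq v(x)\}$ is finite and $w\succeq v$, then $\sum_{x\in Z}(w(x)-v(x))\ge 0$.
   Context: $W_F$ is the set of functions $X\to\mathbb R$ with finite range; addition and scalar multiplication are pointwise. For a preorder $\succeq$, $w\succ v$ means $w\succeq v$ and not $v\succeq w$. For a permutation $\pi$ of $X$, $\pi(w)(x)=w(\pi(x))$. Strong Pareto: for all $w,v\in W$, if $w(x)\ge v(x)$ for all $x$ and $w(x)>v(x)$ for some $x$, then $w\succ v$. Permutation Invariance: for all $w,v\in W$ and every permutation $\pi$ of $X$, $w\succeq v$ iff $\pi(w)\succeq\pi(v)$. Quasi-Independence: for all $w,v,u\in W$, if $w\succeq v$ then for every $\alpha\in[0,1]$, $\alpha w+(1-\alpha)u\succeq \alpha v+(1-\alpha)u$. *)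

theory Defs
  imports Complex_Main "HOL-Library.Countable_Set"
begin

definition W_F :: "('x \<Rightarrow> real) set" where
  "W_F = {w. finite (range w)}"

definition preorder_on_W :: "('x \<Rightarrow> real) set \<Rightarrow> (('x \<Rightarrow> real) \<Rightarrow> ('x \<Rightarrow> real) \<Rightarrow> bool) \<Rightarrow> bool" where
  "preorder_on_W W R \<longleftrightarrow> (\<forall>w\<in>W. R w w) \<and>
     (\<forall>w\<in>W. \<forall>v\<in>W. \<forall>u\<in>W. R w v \<longrightarrow> R v u \<longrightarrow> R w u)"

definition strict_pref :: "(('x \<Rightarrow> real) \<Rightarrow> ('x \<Rightarrow> real) \<Rightarrow> bool) \<Rightarrow> ('x \<Rightarrow> real) \<Rightarrow> ('x \<Rightarrow> real) \<Rightarrow> bool" where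
  "strict_pref R w v \<longleftrightarrow> R w v \<and> \<not> R v w"

definition permute_util :: "('x \<Rightarrow> 'x) \<Rightarrow> ('x \<Rightarrow> real) \<Rightarrow> ('x \<Rightarrow> real)" where
  "permute_util \<pi> w = (\<lambda>x. w (\<pi> x))"

definition strong_pareto :: "('x \<Rightarrow> real) set \<Rightarrow> (('x \<Rightarrow> real) \<Rightarrow> ('x \<Rightarrow> real) \<Rightarrow> bool) \<Rightarrow> bool" where
  "strong_pareto W R \<longleftrightarrow> (\<forall>w\<in>W. \<forall>v\<in>W.
     (\<forall>x. w x \<ge> v x) \<and> (\<exists>x. w x > v x) \<longrightarrow> strict_pref R w v)"

definition permutation_invariance :: "('x \<Rightarrow> real) set \<Rightarrow> (('x \<Rightarrow> real) \<Rightarrow> ('x \<Rightarrow> real) \<Rightarrow> bool) \<Rightarrow> bool" where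
  "permutation_invariance W R \<longleftrightarrow> (\<forall>w\<in>W. \<forall>v\<in>W. \<forall>\<pi>. bij \<pi> \<longrightarrow>
     (R w v \<longleftrightarrow> R (permute_util \<pi> w) (permute_util \<pi> v)))"

definition quasi_independence :: "('x \<Rightarrow> real) set \<Rightarrow> (('x \<Rightarrow> real) \<Rightarrow> ('x \<Rightarrow> real) \<Rightarrow> bool) \<Rightarrow> bool" where
  "quasi_independence W R \<longleftrightarrow> (\<forall>w\<in>W. \<forall>v\<in>W. \<forall>u\<in>W. R w v \<longrightarrow>
     (\<forall>\<alpha>::real. 0 \<le> \<alpha> \<and> \<alpha> \<le> 1 \<longrightarrow>
        R (\<lambda>x. \<alpha> * w x + (1 - \<alpha>) * u x) (\<lambda>x. \<alpha> * v x + (1 - \<alpha>) * u x)))"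

end

theory Submission
  imports Defs "HOL-Combinatorics.Transposition"
begin

text \<open>Whenever \<open>w \<succeq> v\<close> and \<open>w - v\<close> takes both signs, say \<open>w a > v a\<close> and \<open>w b < v b\<close>, Permutation
Invariance gives \<open>\<tau> w \<succeq> \<tau> v\<close> for the transposition \<open>\<tau> = (a b)\<close>, and Quasi-Independence lets us mix the
two comparisons: \<open>\<alpha> w + (1 - \<alpha>) \<tau> w \<succeq> \<alpha> v + (1 - \<alpha>) \<tau> v\<close>. Choosing \<open>\<alpha>\<close> so that the difference
vanishes at \<open>a\<close>, the new pair differs on fewer coordinates, with the same total difference. Iterating,
we reach a pair whose differences all have one sign; Strong Pareto rules out the case where they are
all non-positive and one is negative.\<close>

definition mix :: "real \<Rightarrow> ('x \<Rightarrow> real) \<Rightarrow> ('x \<Rightarrow> real) \<Rightarrow> 'x \<Rightarrow> real" where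
  "mix \<alpha> w u = (\<lambda>x. \<alpha> * w x + (1 - \<alpha>) * u x)"

lemma mix_in_W_F:
  assumes "w \<in> W_F" "u \<in> W_F"
  shows "mix \<alpha> w u \<in> W_F"
proof -
  have "range (mix \<alpha> w u) \<subseteq> (\<lambda>(p, q). \<alpha> * p + (1 - \<alpha>) * q) ` (range w \<times> range u)"
    by (auto simp: mix_def)
  moreover have "finite (range w \<times> range u)"
    using assms by (simp add: W_F_def)
  ultimately show ?thesis
    unfolding W_F_def by (auto intro: finite_subset)
qed

lemma permute_util_in_W_F:
  assumes "w \<in> W_F"
  shows "permute_util \<pi> w \<in> W_F"
proof -
  have "range (permute_util \<pi> w) \<subseteq> range w"
    by (auto simp: permute_util_def)
  then show ?thesis
    using assms unfolding W_F_def by (auto intro: finite_subset)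
qed

lemma mix_swap: "mix \<alpha> w u = mix (1 - \<alpha>) u w"
  by (simp add: mix_def algebra_simps)

lemma quasi_independence_mix:
  assumes "preorder_on_W W_F R" "quasi_independence W_F R"
    and "w \<in> W_F" "v \<in> W_F" "u \<in> W_F" "u' \<in> W_F"
    and "R w v" "R u u'" "0 \<le> \<alpha>" "\<alpha> \<le> 1"
  shows "R (mix \<alpha> w u) (mix \<alpha> v u')"
proof -
  have left: "R (mix \<alpha> w u) (mix \<alpha> v u)"
    using assms(2-5,7,9,10) unfolding quasi_independence_def mix_def by blast
  have "0 \<le> 1 - \<alpha>" "1 - \<alpha> \<le> 1"
    using assms(9,10) by simp_all
  then have "R (mix (1 - \<alpha>) u v) (mix (1 - \<alpha>) u' v)"
    using assms(2,4-6,8) unfolding quasi_independence_def mix_def by blast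
  then have right: "R (mix \<alpha> v u) (mix \<alpha> v u')"
    by (simp only: mix_swap[of \<alpha> v])
  show ?thesis
    using assms(1) left right mix_in_W_F assms(3-6)
    unfolding preorder_on_W_def by blast
qed

lemma strong_pareto_pref_le_imp_eq:
  assumes "strong_pareto W R" "w \<in> W" "v \<in> W" "R w v" "\<forall>x. w x \<le> v x"
  shows "w = v"
proof (rule ccontr)
  assume "w \<noteq> v"
  then obtain x where "w x \<noteq> v x"
    by blast
  with assms(5) have "w x < v x"
    using order_le_neq_trans by blast
  then have "strict_pref R v w"
    using assms(1-3,5) unfolding strong_pareto_def by blast
  with assms(4) show False
    unfolding strict_pref_def by blast
qed

lemma sum_transpose_eq:
  assumes "a \<in> S" "b \<in> S"
  shows "(\<Sum>x\<in>S. f (Transposition.transpose a b x)) = (\<Sum>x\<in>S. f x)"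
  using sum.reindex[OF inj_on_transpose, of f a b S] assms by simp

lemma pref_cancel_coordinate:
  assumes P: "preorder_on_W W_F R" and PI: "permutation_invariance W_F R"
    and Q: "quasi_independence W_F R"
    and W: "w \<in> W_F" "v \<in> W_F" and "R w v"
    and a: "w a > v a" and b: "w b < v b"
  obtains w' v' where "w' \<in> W_F" "v' \<in> W_F" "R w' v'"
    and "{x. w' x \<noteq> v' x} \<subseteq> {x. w x \<noteq> v x} - {a}"
    and "\<And>S. a \<in> S \<Longrightarrow> b \<in> S \<Longrightarrow> (\<Sum>x\<in>S. w' x - v' x) = (\<Sum>x\<in>S. w x - v x)"
proof -
  define \<tau> where "\<tau> = Transposition.transpose a b"
  define \<alpha> where "\<alpha> = (v b - w b) / ((w a - v a) + (v b - w b))"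
  define w' where "w' = mix \<alpha> w (permute_util \<tau> w)"
  define v' where "v' = mix \<alpha> v (permute_util \<tau> v)"
  have "0 \<le> \<alpha>" "\<alpha> \<le> 1"
    using a b by (auto simp: \<alpha>_def field_simps)
  have "bij \<tau>"
    by (simp add: \<tau>_def)
  then have "R w v \<longleftrightarrow> R (permute_util \<tau> w) (permute_util \<tau> v)"
    using PI W unfolding permutation_invariance_def by blast
  with \<open>R w v\<close> have "R (permute_util \<tau> w) (permute_util \<tau> v)"
    by blast
  from quasi_independence_mix[OF P Q, OF W permute_util_in_W_F[OF W(1)] permute_util_in_W_F[OF W(2)]
      \<open>R w v\<close> this \<open>0 \<le> \<alpha>\<close> \<open>\<alpha> \<le> 1\<close>]
  have pref: "R w' v'"
    by (simp only: w'_def v'_def)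
  have mem: "w' \<in> W_F" "v' \<in> W_F"
    unfolding w'_def v'_def using W by (simp_all add: mix_in_W_F permute_util_in_W_F)
  have diff: "w' x - v' x = \<alpha> * (w x - v x) + (1 - \<alpha>) * (w (\<tau> x) - v (\<tau> x))" for x
    by (simp add: w'_def v'_def mix_def permute_util_def algebra_simps)
  have "\<alpha> * (w a - v a) + (1 - \<alpha>) * (w b - v b) = 0"
    using a b by (simp add: \<alpha>_def field_simps)
  then have cancel: "w' a = v' a"
    using diff[of a] by (simp add: \<tau>_def)
  have outside: "w' x - v' x = w x - v x" if "x \<noteq> a" "x \<noteq> b" for x
    using diff[of x] that by (simp add: \<tau>_def algebra_simps)
  have support: "{x. w' x \<noteq> v' x} \<subseteq> {x. w x \<noteq> v x} - {a}"
    using cancel outside b by force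
  have total: "(\<Sum>x\<in>S. w' x - v' x) = (\<Sum>x\<in>S. w x - v x)" if "a \<in> S" "b \<in> S" for S
  proof -
    have reindex: "(\<Sum>x\<in>S. w (\<tau> x) - v (\<tau> x)) = (\<Sum>x\<in>S. w x - v x)"
      unfolding \<tau>_def by (rule sum_transpose_eq[OF that])
    have "(\<Sum>x\<in>S. w' x - v' x)
        = \<alpha> * (\<Sum>x\<in>S. w x - v x) + (1 - \<alpha>) * (\<Sum>x\<in>S. w (\<tau> x) - v (\<tau> x))"
      by (simp add: diff sum.distrib sum_distrib_left)
    then show ?thesis
      by (simp add: reindex algebra_simps)
  qed
  show ?thesis
    by (rule that[OF mem pref support total])
qed

lemma pref_imp_sum_diff_nonneg:
  assumes P: "preorder_on_W W_F R" and SP: "strong_pareto W_F R"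
    and PI: "permutation_invariance W_F R" and Q: "quasi_independence W_F R"
    and "finite S"
  shows "w \<in> W_F \<Longrightarrow> v \<in> W_F \<Longrightarrow> {x. w x \<noteq> v x} \<subseteq> S \<Longrightarrow> R w v
    \<Longrightarrow> (\<Sum>x\<in>S. w x - v x) \<ge> 0"
  using \<open>finite S\<close>
proof (induction S arbitrary: w v rule: finite_psubset_induct)
  case (psubset S)
  show ?case
  proof (cases "\<forall>x\<in>S. w x \<ge> v x")
    case True
    then show ?thesis by (simp add: sum_nonneg)
  next
    case False
    then obtain b where "b \<in> S" "w b < v b" by force
    have "\<exists>a. w a > v a"
    proof (rule ccontr)
      assume "\<nexists>a. w a > v a"
      then have "\<forall>x. w x \<le> v x"
        by (simp add: not_less)
      then have "w = v"
        using strong_pareto_pref_le_imp_eq[OF SP] psubset.prems(1,2,4) by blast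
      with \<open>w b < v b\<close> show False
        by simp
    qed
    then obtain a where a: "w a > v a" ..
    with psubset.prems(3) have "a \<in> S" by fastforce
    obtain w' v' where W': "w' \<in> W_F" "v' \<in> W_F" "R w' v'"
      and support: "{x. w' x \<noteq> v' x} \<subseteq> {x. w x \<noteq> v x} - {a}"
      and sum_eq: "\<And>T. a \<in> T \<Longrightarrow> b \<in> T \<Longrightarrow> (\<Sum>x\<in>T. w' x - v' x) = (\<Sum>x\<in>T. w x - v x)"
      using pref_cancel_coordinate[OF P PI Q psubset.prems(1,2,4) a \<open>w b < v b\<close>] by blast
    have "{x. w' x \<noteq> v' x} \<subseteq> S - {a}"
      using support psubset.prems(3) by blast
    moreover have "S - {a} \<subset> S"
      using \<open>a \<in> S\<close> by blast
    ultimately have "(\<Sum>x\<in>S - {a}. w' x - v' x) \<ge> 0"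
      using psubset.IH W'(1-3) by blast
    moreover have "(\<Sum>x\<in>S. w' x - v' x) = (\<Sum>x\<in>S - {a}. w' x - v' x)"
      using sum.remove[OF psubset.hyps \<open>a \<in> S\<close>, of "\<lambda>x. w' x - v' x"] support by auto
    ultimately show ?thesis
      using sum_eq[OF \<open>a \<in> S\<close> \<open>b \<in> S\<close>] by simp
  qed
qed

theorem lemma1:
  fixes R :: "('x \<Rightarrow> real) \<Rightarrow> ('x \<Rightarrow> real) \<Rightarrow> bool"
    and w v :: "'x \<Rightarrow> real"
  assumes "countable (UNIV :: 'x set)" and "infinite (UNIV :: 'x set)"
    and "preorder_on_W W_F R"
    and "strong_pareto W_F R"
    and "permutation_invariance W_F R"
    and "quasi_independence W_F R"
    and "w \<in> W_F" and "v \<in> W_F"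
    and "finite {x. w x \<noteq> v x}"
    and "R w v"
  shows "(\<Sum>x\<in>{x. w x \<noteq> v x}. w x - v x) \<ge> 0"
  using pref_imp_sum_diff_nonneg[OF assms(3-6,9)] assms(7,8,10) by blast

end
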